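(* Let $I$ be a set of integers and let $(a_{ij})_{i,j\in I}$ be a family of integers. Then there exist integers $(x_i)_{i\in I}$ such that $$x_j-x_i\equiv a_{ij}\pmod{(i,j)}\quad\text{for all } i,j\in I$$ if and only if $$a_{ij}+a_{jk}\equiv a_{ik}\pmod{(i,j,k)}\quad\text{for all } i,j,k\in I.$$
   Context: For integers $i_0,\dots,i_m$, the notation $(i_0,\dots,i_m)$ denotes the ideal of $\mathbb{Z}$ generated by $i_0,\dots,i_m$, i.e. $\gcd(i_0,\dots,i_m)\mathbb{Z}$. A congruence modulo an ideal $J$ means that the difference lies in $J$; in particular, a congruence modulo the zero ideal is an equality. *)

theory Defs
  imports "HOL-Number_Theory.Number_Theory"
begin

end

theory Submission
  imports Defs "HOL-Library.Nat_Bijection"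
begin

text \<open>
  Necessity: modulo \<open>(i,j,k)\<close>, adding the congruences for \<open>(i,j)\<close> and \<open>(j,k)\<close> and
  subtracting the one for \<open>(i,k)\<close> gives the cocycle condition.
  Sufficiency: enumerate \<open>I\<close> and choose the values \<open>x\<^sub>i\<close> one at a time. If \<open>x\<close> already
  works on a finite set \<open>S\<close> and \<open>i\<close> is new, the required congruences
  \<open>x\<^sub>i \<equiv> x\<^sub>j + a\<^sub>j\<^sub>i (mod (j,i))\<close>, \<open>j \<in> S\<close>, are pairwise compatible by the cocycle
  condition, so the Chinese remainder theorem for non-coprime moduli solves them.
  Since every value is fixed once and never changed, the limit of this process works on all of \<open>I\<close>.
\<close>

lemma gcd_Lcm_distrib:
  fixes c :: "'a :: factorial_semiring_gcd"
  assumes "finite A"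
  shows "gcd c (Lcm A) = Lcm (gcd c ` A)"
  using assms by (induction A rule: finite_induct) (simp_all add: gcd_lcm_distrib)

lemma binary_chinese_remainder_gcd_int:
  fixes m1 m2 u1 u2 :: int
  assumes "[u1 = u2] (mod gcd m1 m2)"
  shows "\<exists>x. [x = u1] (mod m1) \<and> [x = u2] (mod m2)"
proof -
  obtain q where q: "u2 - u1 = gcd m1 m2 * q"
    using assms unfolding cong_iff_dvd_diff by (metis dvd_diff_commute dvdE)
  obtain s t where st: "s * m1 + t * m2 = gcd m1 m2"
    using bezout_int by blast
  have "u1 + s * m1 * q - u2 = - (t * m2 * q)"
    using q by (simp add: algebra_simps flip: st)
  then have "[u1 + s * m1 * q = u1] (mod m1) \<and> [u1 + s * m1 * q = u2] (mod m2)"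
    by (simp add: cong_iff_dvd_diff)
  then show ?thesis ..
qed

lemma chinese_remainder_gcd_int:
  fixes m r :: "'b \<Rightarrow> int"
  assumes "finite S" and "\<And>k l. k \<in> S \<Longrightarrow> l \<in> S \<Longrightarrow> [r k = r l] (mod gcd (m k) (m l))"
  shows "\<exists>x. \<forall>k\<in>S. [x = r k] (mod m k)"
  using assms
proof (induction S rule: finite_induct)
  case empty
  then show ?case by simp
next
  case (insert k0 S)
  then obtain v where v: "\<forall>k\<in>S. [v = r k] (mod m k)"
    by (metis insertCI)
  define L where "L = Lcm (m ` S)"
  have "gcd (m k0) (m k) dvd v - r k0" if "k \<in> S" for k
  proof -
    have "[v = r k] (mod gcd (m k0) (m k))"
      using v that by (meson cong_dvd_modulus gcd_dvd2)
    moreover have "[r k = r k0] (mod gcd (m k0) (m k))"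
      using insert.prems that by (metis cong_sym insertCI)
    ultimately show ?thesis
      by (simp add: cong_iff_dvd_diff [symmetric] cong_trans)
  qed
  then have "[v = r k0] (mod gcd L (m k0))"
    unfolding L_def cong_iff_dvd_diff gcd.commute [of "Lcm _"]
    by (simp add: gcd_Lcm_distrib insert.hyps image_image) (blast intro: Lcm_least)
  then obtain w where w: "[w = v] (mod L)" "[w = r k0] (mod m k0)"
    using binary_chinese_remainder_gcd_int by blast
  have "[w = r k] (mod m k)" if "k \<in> S" for k
    using cong_dvd_modulus [OF w(1)] v that unfolding L_def
    by (meson cong_trans dvd_Lcm image_eqI)
  with w(2) show ?case by auto
qed

definition cocycle_on :: "int set \<Rightarrow> (int \<Rightarrow> int \<Rightarrow> int) \<Rightarrow> bool" where
  "cocycle_on I a \<longleftrightarrow> (\<forall>i\<in>I. \<forall>j\<in>I. \<forall>k\<in>I. [a i j + a j k = a i k] (mod gcd (gcd i j) k))"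

definition potential_on :: "int set \<Rightarrow> (int \<Rightarrow> int \<Rightarrow> int) \<Rightarrow> (int \<Rightarrow> int) \<Rightarrow> bool" where
  "potential_on I a x \<longleftrightarrow> (\<forall>i\<in>I. \<forall>j\<in>I. [x j - x i = a i j] (mod gcd i j))"

lemma cocycle_on_if_potential_on:
  assumes "potential_on I a x"
  shows "cocycle_on I a"
  unfolding cocycle_on_def
proof (intro ballI)
  fix i j k assume "i \<in> I" "j \<in> I" "k \<in> I"
  let ?g = "gcd (gcd i j) k"
  have "?g dvd gcd i j" "?g dvd gcd j k" "?g dvd gcd i k"
    by (meson dvd_trans gcd_dvd1 gcd_dvd2 gcd_greatest)+
  then have "[x j - x i = a i j] (mod ?g)" "[x k - x j = a j k] (mod ?g)"
    "[x k - x i = a i k] (mod ?g)"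
    using assms \<open>i \<in> I\<close> \<open>j \<in> I\<close> \<open>k \<in> I\<close> unfolding potential_on_def
    by (meson cong_dvd_modulus)+
  then have "[(x j - x i) + (x k - x j) = a i j + a j k] (mod ?g)"
    by (intro cong_add)
  then have "[x k - x i = a i j + a j k] (mod ?g)"
    by simp
  with \<open>[x k - x i = a i k] (mod ?g)\<close> show "[a i j + a j k = a i k] (mod ?g)"
    by (metis cong_sym cong_trans)
qed

lemma cocycle_on_diag:
  assumes "cocycle_on I a" "i \<in> I"
  shows "[a i i = 0] (mod i)"
proof -
  have "[a i i + a i i = a i i] (mod gcd (gcd i i) i)"
    using assms unfolding cocycle_on_def by blast
  then have "[a i i + a i i = a i i] (mod i)"
    by simp
  then show ?thesis
    by (simp only: cong_add_rcancel_0)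
qed

lemma cocycle_on_swap:
  assumes "cocycle_on I a" "i \<in> I" "j \<in> I"
  shows "[a i j + a j i = 0] (mod gcd i j)"
proof -
  have "[a i j + a j i = a i i] (mod gcd i j)"
    using assms unfolding cocycle_on_def by (metis gcd.commute gcd.left_idem)
  moreover have "[a i i = 0] (mod gcd i j)"
    using cocycle_on_diag [OF assms(1,2)] by (rule cong_dvd_modulus) simp
  ultimately show ?thesis
    by (rule cong_trans)
qed

lemma potential_on_insert:
  assumes "cocycle_on I a" "finite S" "S \<subseteq> I" "i \<in> I" "potential_on S a x"
  shows "\<exists>v. potential_on (insert i S) a (x(i := v))"
proof (cases "i \<in> S")
  case True
  with assms(5) have "potential_on (insert i S) a (x(i := x i))"
    by (simp add: insert_absorb)
  then show ?thesis ..
next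
  case False
  have "\<exists>v. \<forall>j\<in>S. [v = x j + a j i] (mod gcd j i)"
  proof (rule chinese_remainder_gcd_int [OF \<open>finite S\<close>])
    fix j k assume "j \<in> S" "k \<in> S"
    let ?g = "gcd (gcd j i) (gcd k i)"
    have "?g dvd gcd j k" "?g dvd gcd (gcd j k) i"
      by (meson dvd_trans gcd_dvd1 gcd_dvd2 gcd_greatest)+
    moreover have "gcd j k dvd x k - x j - a j k" "gcd (gcd j k) i dvd a j k + a k i - a j i"
      using assms \<open>j \<in> S\<close> \<open>k \<in> S\<close>
      unfolding potential_on_def cocycle_on_def cong_iff_dvd_diff by blast+
    ultimately have "?g dvd (x k - x j - a j k) + (a j k + a k i - a j i)"
      by (meson dvd_add dvd_trans)
    then show "[x j + a j i = x k + a k i] (mod ?g)"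
      by (simp add: cong_iff_dvd_diff dvd_diff_commute algebra_simps)
  qed
  then obtain v where v: "\<And>j. j \<in> S \<Longrightarrow> [v = x j + a j i] (mod gcd j i)"
    by blast
  have "potential_on (insert i S) a (x(i := v))"
    unfolding potential_on_def
  proof (intro ballI)
    fix j k assume "j \<in> insert i S" "k \<in> insert i S"
    then consider "j = i" "k = i" | "j = i" "k \<in> S" | "j \<in> S" "k = i" | "j \<in> S" "k \<in> S"
      by blast
    then show "[(x(i := v)) k - (x(i := v)) j = a j k] (mod gcd j k)"
    proof cases
      case 1
      then show ?thesis
        using cocycle_on_diag [OF assms(1,4)] by (simp add: cong_sym)
    next
      case 2
      then have "k \<in> I"
        using \<open>S \<subseteq> I\<close> by blast
      have "gcd i k dvd v - (x k + a k i)"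
        using v [OF \<open>k \<in> S\<close>] by (simp add: cong_iff_dvd_diff gcd.commute)
      moreover have "gcd i k dvd a i k + a k i"
        using cocycle_on_swap [OF assms(1,4) \<open>k \<in> I\<close>] by (simp add: cong_iff_dvd_diff)
      ultimately
      have "gcd i k dvd (v - (x k + a k i)) + (a i k + a k i)"
        by (rule dvd_add)
      with 2 False show ?thesis
        by (auto simp: cong_iff_dvd_diff dvd_diff_commute algebra_simps)
    next
      case 3
      with False show ?thesis
        using v [of j] by (auto simp: cong_iff_dvd_diff algebra_simps)
    next
      case 4
      with False show ?thesis
        using assms(5) by (auto simp: potential_on_def)
    qed
  qed
  then show ?thesis ..
qed

lemma updated_sequence_stable:
  fixes f :: "nat \<Rightarrow> 'a \<Rightarrow> 'b"
  assumes "\<And>n y. y \<noteq> d n \<Longrightarrow> f (Suc n) y = f n y" "inj d" "k < m"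
  shows "f m (d k) = f (Suc k) (d k)"
  using \<open>k < m\<close>
proof (induction m)
  case 0
  then show ?case by simp
next
  case (Suc m)
  show ?case
  proof (cases "k = m")
    case True
    then show ?thesis by simp
  next
    case False
    with Suc.prems have "k < m" by simp
    moreover from False \<open>inj d\<close> have "d k \<noteq> d m"
      by (meson injD)
    ultimately show ?thesis
      using Suc.IH assms(1) by simp
  qed
qed

lemma potential_on_if_cocycle_on:
  assumes "cocycle_on I a"
  shows "\<exists>x. potential_on I a x"
proof -
  define S where "S n = I \<inter> int_decode ` {..<n}" for n
  have "\<exists>f. \<forall>n. potential_on (S n) a (f n) \<and> (\<forall>j. j \<noteq> int_decode n \<longrightarrow> f (Suc n) j = f n j)"
  proof (rule dependent_nat_choice)
    show "\<exists>x. potential_on (S 0) a x"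
      by (simp add: S_def potential_on_def)
  next
    fix x n assume x: "potential_on (S n) a x"
    show "\<exists>y. potential_on (S (Suc n)) a y \<and> (\<forall>j. j \<noteq> int_decode n \<longrightarrow> y j = x j)"
    proof (cases "int_decode n \<in> I")
      case True
      then have "S (Suc n) = insert (int_decode n) (S n)"
        by (auto simp: S_def lessThan_Suc)
      with potential_on_insert [OF assms _ _ True x] show ?thesis
        by (auto simp: S_def)
    next
      case False
      then have "S (Suc n) = S n"
        by (auto simp: S_def lessThan_Suc)
      with x show ?thesis
        by auto
    qed
  qed
  then obtain f where f: "\<And>n. potential_on (S n) a (f n)"
    and f_upd: "\<And>n j. j \<noteq> int_decode n \<Longrightarrow> f (Suc n) j = f n j"
    by blast
  define x where "x j = f (Suc (int_encode j)) j" for j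
  have x_eq: "x j = f m j" if "int_encode j < m" for j m
    using updated_sequence_stable [of int_decode f, OF f_upd inj_int_decode that]
    by (simp add: x_def)
  have "potential_on I a x"
    unfolding potential_on_def
  proof (intro ballI)
    fix i j assume "i \<in> I" "j \<in> I"
    define N where "N = Suc (max (int_encode i) (int_encode j))"
    have N: "int_encode i < N" "int_encode j < N"
      by (simp_all add: N_def)
    then have "i \<in> S N" "j \<in> S N"
      using \<open>i \<in> I\<close> \<open>j \<in> I\<close> unfolding S_def
      by (auto intro: image_eqI [where x = "int_encode _"])
    with f [of N] show "[x j - x i = a i j] (mod gcd i j)"
      unfolding potential_on_def x_eq [OF N(1)] x_eq [OF N(2)] by blast
  qed
  then show ?thesis by blast
qed

theorem theorem1:
  fixes I :: "int set" and a :: "int \<Rightarrow> int \<Rightarrow> int"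
  shows "(\<exists>x :: int \<Rightarrow> int. \<forall>i\<in>I. \<forall>j\<in>I. [x j - x i = a i j] (mod (gcd i j)))
     \<longleftrightarrow> (\<forall>i\<in>I. \<forall>j\<in>I. \<forall>k\<in>I. [a i j + a j k = a i k] (mod (gcd (gcd i j) k)))"
  using cocycle_on_if_potential_on potential_on_if_cocycle_on
  unfolding potential_on_def cocycle_on_def by blast

end
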